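(* Let $\lambda$ be a partition and $T$ an $\mathbb{N}$-tableau of shape $\lambda$. Consider any ordering $b_1,\ldots,b_r$ of the boxes of $\lambda$ that is a linear extension of the poset $P_\lambda$ (where $(i,j)\le(k,l)$ iff $i\le k$ and $j\le l$), and let $T_s$ denote the restriction of $T$ to the boxes $b_1,\dots,b_s$ (so each $T_s$ is obtained from $T_{s-1}$ by adding the corner box $b_s$ with its entry from $T$). Starting from $\widehat{T_0}=\emptyset$ and applying the toggle step described in the context to pass from $\widehat{T_{s-1}}$ to $\widehat{T_s}$ for $s=1,\dots,r$, the resulting final tableau $\widehat{T_r}$ does not depend on the choice of linear extension. Thus the map $T\mapsto \widehat{T}$ is well defined.
   Context: Partitions are drawn in English notation with matrix coordinates: the box in row $i$ and column $j$ is $(i,j)$, and $(1,1)$ is the upper-left box. An $\mathbb{N}$-tableau of shape $\lambda$ is an assignment of a nonnegative integer to each box of $\lambda$. A corner box of a partition is a box $(i,j)$ such that neither $(i+1,j)$ nor $(i,j+1)$ is a box. Toggle step: Suppose $T'$ is obtained from an $\mathbb{N}$-tableau $T$ by adding a box $(i,j)$ (which is a corner box of $\mathrm{sh}(T')$) with entry $x$, and $\widehat{T}$ is a given $\mathbb{N}$-tableau of shape $\mathrm{sh}(T)$. For $k\ge1$ let $\beta_k$ be the entry of $\widehat{T}$ at $(i-k,j-k)$, $\gamma_k$ the entry at $(i-k+1,j-k)$ and $\alpha_k$ the entry at $(i-k,j-k+1)$, each taken to be $0$ if the corresponding box is not a box of $\mathrm{sh}(T)$ (in particular if a coordinate is nonpositive).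 Then $\widehat{T'}$ is the $\mathbb{N}$-tableau of shape $\mathrm{sh}(T')$ that agrees with $\widehat{T}$ except that for each $1\le k<\min(i,j)$ the entry at $(i-k,j-k)$ is replaced by $\max(\alpha_{k+1},\gamma_{k+1})+\min(\alpha_k,\gamma_k)-\beta_k$, and the entry at the new box $(i,j)$ is $\max(\alpha_1,\gamma_1)+x$. *)

theory Defs
  imports Main
begin

type_synonym box = "nat \<times> nat"

definition partition :: "nat list \<Rightarrow> bool" where
  "partition lam \<longleftrightarrow> sorted_wrt (\<ge>) lam \<and> 0 \<notin> set lam"

text \<open>Young diagram in English notation / matrix coordinates, boxes (i,j) with 1-based indices.\<close>
definition boxes :: "nat list \<Rightarrow> box set" where
  "boxes lam = {(i, j). 1 \<le> i \<and> i \<le> length lam \<and> 1 \<le> j \<and> j \<le> lam ! (i - 1)}"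

definition box_le :: "box \<Rightarrow> box \<Rightarrow> bool" where
  "box_le b c \<longleftrightarrow> fst b \<le> fst c \<and> snd b \<le> snd c"

definition linear_extension :: "nat list \<Rightarrow> box list \<Rightarrow> bool" where
  "linear_extension lam bs \<longleftrightarrow> distinct bs \<and> set bs = boxes lam \<and>
     (\<forall>p < length bs. \<forall>q < length bs. box_le (bs ! p) (bs ! q) \<longrightarrow> p \<le> q)"

definition entry :: "box set \<Rightarrow> (box \<Rightarrow> int) \<Rightarrow> box \<Rightarrow> int" where
  "entry S F b = (if b \<in> S then F b else 0)"

text \<open>Toggle step: S = sh(T), F = That (of shape S), new corner box (i,j) with entry x.
  Result is a tableau of shape insert (i,j) S (0 outside).\<close>
definition toggle_step :: "box set \<Rightarrow> (box \<Rightarrow> int) \<Rightarrow> box \<Rightarrow> int \<Rightarrow> box \<Rightarrow> int" where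
  "toggle_step S F c x = (case c of (i, j) \<Rightarrow>
     (let \<beta> = (\<lambda>k. entry S F (i - k, j - k));
          \<gamma> = (\<lambda>k. entry S F (i - k + 1, j - k));
          \<alpha> = (\<lambda>k. entry S F (i - k, j - k + 1))
      in (\<lambda>(a, b).
        if (a, b) \<notin> insert (i, j) S then 0
        else if (a, b) = (i, j) then max (\<alpha> 1) (\<gamma> 1) + x
        else if 1 \<le> a \<and> 1 \<le> b \<and> a < i \<and> b < j \<and> i - a = j - b then
          (let k = i - a in max (\<alpha> (k + 1)) (\<gamma> (k + 1)) + min (\<alpha> k) (\<gamma> k) - \<beta> k)
        else F (a, b))))"

definition toggle_state :: "(box \<Rightarrow> nat) \<Rightarrow> box set \<times> (box \<Rightarrow> int) \<Rightarrow> box \<Rightarrow> box set \<times> (box \<Rightarrow> int)" where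
  "toggle_state T st b = (insert b (fst st), toggle_step (fst st) (snd st) b (int (T b)))"

definition hat :: "(box \<Rightarrow> nat) \<Rightarrow> box list \<Rightarrow> box \<Rightarrow> int" where
  "hat T bs = snd (foldl (toggle_state T) ({}, (\<lambda>_. 0)) bs)"

end

theory Submission
  imports Defs
begin

text \<open>The toggle step at a box \<open>c\<close> writes only on the diagonal of \<open>c\<close>, and the values it
  writes depend only on that diagonal and its two neighbours. Two incomparable boxes lie on
  diagonals at distance at least 2, so their toggle steps commute. Any two linear extensions
  of the same poset differ by swaps of adjacent incomparable boxes, so the final tableau is
  the same. Nothing here uses that the shape is a partition, only that boxes have positive
  coordinates.\<close>

definition content :: "box \<Rightarrow> int" where
  "content c = int (snd c) - int (fst c)"

definition corner_value :: "box set \<Rightarrow> (box \<Rightarrow> int) \<Rightarrow> nat \<Rightarrow> nat \<Rightarrow> int \<Rightarrow> int" where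
  "corner_value S F i j x = max (entry S F (i - 1, j)) (entry S F (i, j - 1)) + x"

definition toggled_value :: "box set \<Rightarrow> (box \<Rightarrow> int) \<Rightarrow> nat \<Rightarrow> nat \<Rightarrow> int" where
  "toggled_value S F a b =
     max (entry S F (a - 1, b)) (entry S F (a, b - 1))
   + min (entry S F (a, b + 1)) (entry S F (a + 1, b)) - entry S F (a, b)"

lemma toggle_step_eq:
  assumes "0 < i" "0 < j"
  shows "toggle_step S F (i, j) x (a, b) =
    (if (a, b) \<notin> insert (i, j) S then 0
     else if (a, b) = (i, j) then corner_value S F i j x
     else if 1 \<le> a \<and> 1 \<le> b \<and> a < i \<and> content (a, b) = content (i, j)
       then toggled_value S F a b
     else F (a, b))"
proof -
  have diagonal: "(1 \<le> a \<and> 1 \<le> b \<and> a < i \<and> b < j \<and> i - a = j - b) =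
      (1 \<le> a \<and> 1 \<le> b \<and> a < i \<and> content (a, b) = content (i, j))"
    by (auto simp: content_def)
  have shifts: "i - (i - a) = a" "j - (i - a) = b" "i - (i - a) + 1 = a + 1"
      "j - (i - a) + 1 = b + 1" "i - (i - a + 1) = a - 1" "j - (i - a + 1) = b - 1"
    if "1 \<le> a \<and> 1 \<le> b \<and> a < i \<and> b < j \<and> i - a = j - b"
    using that by auto
  have "toggle_step S F (i, j) x (a, b) =
    (if (a, b) \<notin> insert (i, j) S then 0
     else if (a, b) = (i, j) then corner_value S F i j x
     else if 1 \<le> a \<and> 1 \<le> b \<and> a < i \<and> b < j \<and> i - a = j - b
       then toggled_value S F a b
     else F (a, b))"
    unfolding toggle_step_def Let_def corner_value_def toggled_value_def
    using assms shifts by simp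
  then show ?thesis
    by (simp only: diagonal)
qed

lemma entry_toggle_step_other_diagonal:
  assumes "content (a, b) \<noteq> content (i, j)"
  shows "entry (insert (i, j) S) (toggle_step S F (i, j) x) (a, b) = entry S F (a, b)"
  using assms unfolding entry_def toggle_step_def Let_def content_def by auto

lemma corner_value_toggle_step_far:
  assumes "2 \<le> \<bar>content (a, b) - content (i, j)\<bar>"
  shows "corner_value (insert (i, j) S) (toggle_step S F (i, j) x) a b y = corner_value S F a b y"
  using assms unfolding corner_value_def
  by (simp add: entry_toggle_step_other_diagonal content_def)

lemma toggled_value_toggle_step_far:
  assumes "2 \<le> \<bar>content (a, b) - content (i, j)\<bar>"
  shows "toggled_value (insert (i, j) S) (toggle_step S F (i, j) x) a b = toggled_value S F a b"
  using assms unfolding toggled_value_def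
  by (simp add: entry_toggle_step_other_diagonal content_def)

lemma toggle_step_commute:
  assumes "0 < i" "0 < j" "0 < i'" "0 < j'"
    and far: "2 \<le> \<bar>content (i, j) - content (i', j')\<bar>"
  shows "toggle_step (insert (i, j) S) (toggle_step S F (i, j) x) (i', j') y
       = toggle_step (insert (i', j') S) (toggle_step S F (i', j') y) (i, j) x"
proof (rule ext, clarify)
  fix a b
  have far': "2 \<le> \<bar>content (i', j') - content (i, j)\<bar>"
    using far by linarith
  have toggled_value_after_ij:
    "toggled_value (insert (i, j) S) (toggle_step S F (i, j) x) a b = toggled_value S F a b"
    if "content (a, b) = content (i', j')"
    using that far' by (auto intro: toggled_value_toggle_step_far)
  have toggled_value_after_ij':
    "toggled_value (insert (i', j') S) (toggle_step S F (i', j') y) a b = toggled_value S F a b"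
    if "content (a, b) = content (i, j)"
    using that far by (auto intro: toggled_value_toggle_step_far)
  have distinct_corners: "(i, j) \<noteq> (i', j')"
    using far by auto
  show "toggle_step (insert (i, j) S) (toggle_step S F (i, j) x) (i', j') y (a, b)
      = toggle_step (insert (i', j') S) (toggle_step S F (i', j') y) (i, j) x (a, b)"
    using assms far far' distinct_corners toggled_value_after_ij toggled_value_after_ij'
    by (auto simp: toggle_step_eq corner_value_toggle_step_far)
qed

lemma content_distance_incomparable:
  assumes "\<not> box_le c d" "\<not> box_le d c"
  shows "2 \<le> \<bar>content c - content d\<bar>"
  using assms unfolding box_le_def content_def by auto

lemma toggle_state_commute:
  assumes "0 < fst c" "0 < snd c" "0 < fst d" "0 < snd d"
    and "\<not> box_le c d" "\<not> box_le d c"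
  shows "toggle_state T (toggle_state T st c) d = toggle_state T (toggle_state T st d) c"
  using assms toggle_step_commute[of "fst c" "snd c" "fst d" "snd d" "fst st"]
    content_distance_incomparable[of c d]
  unfolding toggle_state_def by (cases c, cases d) (auto simp: insert_commute)

lemma foldl_toggle_state_move_to_front:
  assumes "set (c # u) \<subseteq> {d. 0 < fst d \<and> 0 < snd d}"
    and "\<forall>d\<in>set u. \<not> box_le d c \<and> \<not> box_le c d"
  shows "foldl (toggle_state T) st (u @ [c]) = foldl (toggle_state T) st (c # u)"
  using assms
proof (induction u arbitrary: st)
  case Nil
  then show ?case by simp
next
  case (Cons d u)
  have "foldl (toggle_state T) st ((d # u) @ [c])
      = foldl (toggle_state T) (toggle_state T (toggle_state T st d) c) u"
    using Cons by simp
  also have "toggle_state T (toggle_state T st d) c = toggle_state T (toggle_state T st c) d"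
    using Cons.prems by (intro toggle_state_commute) auto
  finally show ?case by simp
qed

lemma foldl_toggle_state_eq:
  assumes "sorted_wrt (\<lambda>c d. \<not> box_le d c) bs1" "sorted_wrt (\<lambda>c d. \<not> box_le d c) bs2"
    and "set bs1 = set bs2" "set bs1 \<subseteq> {d. 0 < fst d \<and> 0 < snd d}"
  shows "foldl (toggle_state T) st bs1 = foldl (toggle_state T) st bs2"
  using assms
proof (induction bs1 arbitrary: st bs2)
  case Nil
  then show ?case by simp
next
  case (Cons c r)
  have distinct: "distinct xs" if "sorted_wrt (\<lambda>c d. \<not> box_le d c) xs" for xs
    using that by (induction xs) (auto simp: box_le_def)
  obtain u v where bs2: "bs2 = u @ c # v"
    using Cons.prems(3) by (metis list.set_intros(1) split_list)
  have u_before_c: "\<not> box_le c d" "d \<noteq> c" if "d \<in> set u" for d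
    using Cons.prems(2) that unfolding bs2 by (auto simp: sorted_wrt_append box_le_def)
  have u_in_r: "set u \<subseteq> set r"
    using Cons.prems(3) u_before_c(2) unfolding bs2 by auto
  have incomparable: "\<forall>d\<in>set u. \<not> box_le d c \<and> \<not> box_le c d"
    using Cons.prems(1) u_in_r u_before_c(1) by auto
  have set_r: "set r = set (u @ v)"
    using distinct[OF Cons.prems(1)] distinct[OF Cons.prems(2)] Cons.prems(3)
    unfolding bs2 by auto
  have "foldl (toggle_state T) st bs2
      = foldl (toggle_state T) (foldl (toggle_state T) st (u @ [c])) v"
    unfolding bs2 by simp
  also have "\<dots> = foldl (toggle_state T) (toggle_state T st c) (u @ v)"
    using foldl_toggle_state_move_to_front[OF _ incomparable] Cons.prems(3,4) u_in_r
    unfolding bs2 by auto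
  also have "\<dots> = foldl (toggle_state T) (toggle_state T st c) r"
    using Cons.prems set_r by (intro Cons.IH[symmetric]) (auto simp: bs2 sorted_wrt_append)
  finally show ?case by simp
qed

lemma linear_extension_sorted:
  assumes "linear_extension lam bs"
  shows "sorted_wrt (\<lambda>c d. \<not> box_le d c) bs"
  using assms unfolding linear_extension_def sorted_wrt_iff_nth_less
  by (meson le_less_trans less_irrefl less_trans)

lemma linear_extension_positive:
  assumes "linear_extension lam bs"
  shows "set bs \<subseteq> {d. 0 < fst d \<and> 0 < snd d}"
  using assms unfolding linear_extension_def boxes_def by auto

theorem proposition2p4:
  fixes lam :: "nat list" and T :: "nat \<times> nat \<Rightarrow> nat" and bs1 bs2 :: "(nat \<times> nat) list"
  assumes "partition lam"
    and "linear_extension lam bs1"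
    and "linear_extension lam bs2"
  shows "hat T bs1 = hat T bs2"
proof -
  have "set bs1 = set bs2"
    using assms(2,3) unfolding linear_extension_def by simp
  with assms(2,3)
  have "foldl (toggle_state T) ({}, \<lambda>_. 0) bs1 = foldl (toggle_state T) ({}, \<lambda>_. 0) bs2"
    by (intro foldl_toggle_state_eq linear_extension_sorted linear_extension_positive)
  then show ?thesis
    unfolding hat_def by simp
qed

end
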